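(* Let $A$ be an associative unital algebra and $(H,\pi_l,\pi_r,\psi_l,\psi_r)$ an L-R-twisting datum for $A$. Then $(H,\pi_r,\psi_r)$ is a right twisting datum for the left twisted algebra $(A,\star)$ and the corresponding right twisted product on $(A,\star)$ equals the L-R-twisted product $\bullet$; likewise $(H,\pi_l,\psi_l)$ is a left twisting datum for the right twisted algebra $(A,\diamond)$ and the corresponding left twisted product on $(A,\diamond)$ equals $\bullet$.
   Context: Work over a field $k$; $H$ an ordinary bialgebra, $\Delta(h)=h_1\otimes h_2$. An L-R-twisting datum for an algebra $A$: $H$-bimodule algebra structure on $A$ (actions $h\cdot a$, $a\cdot h$, with $h\cdot(ab)=(h_1\cdot a)(h_2\cdot b)$, $(ab)\cdot h=(a\cdot h_1)(b\cdot h_2)$, $h\cdot1=1\cdot h=\varepsilon(h)1$), $H$-bicomodule algebra structure on $A$ (algebra maps $\psi_l(a)=a_{[-1]}\otimes a_{[0]}$, $\psi_r(a)=a_{<0>}\otimes a_{<1>}$ forming an $H$-bicomodule), and compatibilities $(h\cdot a)_{[-1]}\otimes(h\cdot a)_{[0]}=a_{[-1]}\otimes h\cdot a_{[0]}$, $(h\cdot a)_{<0>}\otimes(h\cdot a)_{<1>}=h\cdot a_{<0>}\otimes a_{<1>}$, $(a\cdot h)_{[-1]}\otimes(a\cdot h)_{[0]}=a_{[-1]}\otimes a_{[0]}\cdot h$, $(a\cdot h)_{<0>}\otimes(a\cdot h)_{<1>}=a_{<0>}\cdot h\otimes a_{<1>}$. The L-R-twisted product is $a\bullet b=(a_{[0]}\cdot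 b_{<1>})(a_{[-1]}\cdot b_{<0>})$. A left twisting datum $(H,\pi,\psi)$ for an algebra $A$: $A$ is a left $H$-module algebra ($h\cdot a$) and left $H$-comodule algebra ($a\mapsto a_{(-1)}\otimes a_{(0)}$) with $(h\cdot a)_{(-1)}\otimes(h\cdot a)_{(0)}=a_{(-1)}\otimes h\cdot a_{(0)}$; the left twisted product is $a\star b=a_{(0)}(a_{(-1)}\cdot b)$. A right twisting datum $(H,\pi_r,\psi_r)$: $A$ a right $H$-module algebra ($a\cdot h$) and right $H$-comodule algebra ($a\mapsto a_{<0>}\otimes a_{<1>}$) with $(a\cdot h)_{<0>}\otimes(a\cdot h)_{<1>}=a_{<0>}\cdot h\otimes a_{<1>}$; the right twisted product is $a\diamond b=(a\cdot b_{<1>})b_{<0>}$. In the statement, $\star$ is computed from $(H,\pi_l,\psi_l)$ and $\diamond$ from $(H,\pi_r,\psi_r)$. *)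

theory Defs
  imports Complex_Main
begin

text \<open>
  A k-vector space is a
  type of class ab_group_add together with a scalar multiplication s, required to satisfy
  the library locale vector_space s.  An element of a tensor product V (x) W is represented
  by a finite formal sum, i.e. a list of pairs [(v1,w1),...,(vn,wn)] standing for
  v1 (x) w1 + ... + vn (x) wn (similarly triples for V (x) W (x) U).  Equality of two such
  formal sums in V (x) W is equality of the tensors they denote; since over a field the
  canonical map V (x) W -> (V (x) W)** is injective and (V (x) W)* = Bil(V x W, k), this is
  exactly: they agree under every k-valued bilinear form.  Sweedler notation
  Delta(h) = h1 (x) h2 is thus a function Delta :: 'h => ('h * 'h) list.
\<close>

definition bilinear_form ::
  "('k::field \<Rightarrow> 'v::ab_group_add \<Rightarrow> 'v) \<Rightarrow> ('k \<Rightarrow> 'w::ab_group_add \<Rightarrow> 'w) \<Rightarrow> ('v \<Rightarrow> 'w \<Rightarrow> 'k) \<Rightarrow> bool" where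
  "bilinear_form sV sW \<beta> \<longleftrightarrow>
     (\<forall>w. Vector_Spaces.linear sV times (\<lambda>v. \<beta> v w)) \<and> (\<forall>v. Vector_Spaces.linear sW times (\<beta> v))"

definition trilinear_form ::
  "('k::field \<Rightarrow> 'u::ab_group_add \<Rightarrow> 'u) \<Rightarrow> ('k \<Rightarrow> 'v::ab_group_add \<Rightarrow> 'v) \<Rightarrow>
   ('k \<Rightarrow> 'w::ab_group_add \<Rightarrow> 'w) \<Rightarrow> ('u \<Rightarrow> 'v \<Rightarrow> 'w \<Rightarrow> 'k) \<Rightarrow> bool" where
  "trilinear_form sU sV sW \<gamma> \<longleftrightarrow>
     (\<forall>v w. Vector_Spaces.linear sU times (\<lambda>u. \<gamma> u v w)) \<and> (\<forall>u w. Vector_Spaces.linear sV times (\<lambda>v. \<gamma> u v w)) \<and>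
     (\<forall>u v. Vector_Spaces.linear sW times (\<lambda>w. \<gamma> u v w))"

definition tensor_eq2 ::
  "('k::field \<Rightarrow> 'v::ab_group_add \<Rightarrow> 'v) \<Rightarrow> ('k \<Rightarrow> 'w::ab_group_add \<Rightarrow> 'w) \<Rightarrow>
   ('v \<times> 'w) list \<Rightarrow> ('v \<times> 'w) list \<Rightarrow> bool" where
  "tensor_eq2 sV sW xs ys \<longleftrightarrow>
     (\<forall>\<beta> :: 'v \<Rightarrow> 'w \<Rightarrow> 'k. bilinear_form sV sW \<beta> \<longrightarrow>
        sum_list (map (\<lambda>(v, w). \<beta> v w) xs) = sum_list (map (\<lambda>(v, w). \<beta> v w) ys))"

definition tensor_eq3 ::
  "('k::field \<Rightarrow> 'u::ab_group_add \<Rightarrow> 'u) \<Rightarrow> ('k \<Rightarrow> 'v::ab_group_add \<Rightarrow> 'v) \<Rightarrow>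
   ('k \<Rightarrow> 'w::ab_group_add \<Rightarrow> 'w) \<Rightarrow> ('u \<times> 'v \<times> 'w) list \<Rightarrow> ('u \<times> 'v \<times> 'w) list \<Rightarrow> bool" where
  "tensor_eq3 sU sV sW xs ys \<longleftrightarrow>
     (\<forall>\<gamma> :: 'u \<Rightarrow> 'v \<Rightarrow> 'w \<Rightarrow> 'k. trilinear_form sU sV sW \<gamma> \<longrightarrow>
        sum_list (map (\<lambda>(u, v, w). \<gamma> u v w) xs) = sum_list (map (\<lambda>(u, v, w). \<gamma> u v w) ys))"

definition k_algebra ::
  "('k::field \<Rightarrow> 'a::ab_group_add \<Rightarrow> 'a) \<Rightarrow> ('a \<Rightarrow> 'a \<Rightarrow> 'a) \<Rightarrow> 'a \<Rightarrow> bool" where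
  "k_algebra s m u \<longleftrightarrow> vector_space s \<and>
     (\<forall>b. Vector_Spaces.linear s s (\<lambda>a. m a b)) \<and> (\<forall>a. Vector_Spaces.linear s s (m a)) \<and>
     (\<forall>a b c. m (m a b) c = m a (m b c)) \<and> (\<forall>a. m u a = a \<and> m a u = a)"

definition bialgebra ::
  "('k::field \<Rightarrow> 'h::ab_group_add \<Rightarrow> 'h) \<Rightarrow> ('h \<Rightarrow> 'h \<Rightarrow> 'h) \<Rightarrow> 'h \<Rightarrow>
   ('h \<Rightarrow> ('h \<times> 'h) list) \<Rightarrow> ('h \<Rightarrow> 'k) \<Rightarrow> bool" where
  "bialgebra sH mH uH \<Delta> \<epsilon> \<longleftrightarrow> k_algebra sH mH uH \<and>
     \<comment> \<open>Delta linear\<close>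
     (\<forall>x y. tensor_eq2 sH sH (\<Delta> (x + y)) (\<Delta> x @ \<Delta> y)) \<and>
     (\<forall>c x. tensor_eq2 sH sH (\<Delta> (sH c x)) (map (\<lambda>(p, q). (sH c p, q)) (\<Delta> x))) \<and>
     \<comment> \<open>eps linear\<close>
     Vector_Spaces.linear sH times \<epsilon> \<and>
     \<comment> \<open>coassociativity\<close>
     (\<forall>x. tensor_eq3 sH sH sH
        [(p1, p2, q). (p, q) \<leftarrow> \<Delta> x, (p1, p2) \<leftarrow> \<Delta> p]
        [(p, q1, q2). (p, q) \<leftarrow> \<Delta> x, (q1, q2) \<leftarrow> \<Delta> q]) \<and>
     \<comment> \<open>counit\<close>
     (\<forall>x. sum_list (map (\<lambda>(p, q). sH (\<epsilon> p) q) (\<Delta> x)) = x \<and>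
          sum_list (map (\<lambda>(p, q). sH (\<epsilon> q) p) (\<Delta> x)) = x) \<and>
     \<comment> \<open>Delta and eps are algebra maps\<close>
     (\<forall>x y. tensor_eq2 sH sH (\<Delta> (mH x y)) [(mH p r, mH q t). (p, q) \<leftarrow> \<Delta> x, (r, t) \<leftarrow> \<Delta> y]) \<and>
     tensor_eq2 sH sH (\<Delta> uH) [(uH, uH)] \<and>
     (\<forall>x y. \<epsilon> (mH x y) = \<epsilon> x * \<epsilon> y) \<and> \<epsilon> uH = 1"

definition left_module_algebra ::
  "('k::field \<Rightarrow> 'h::ab_group_add \<Rightarrow> 'h) \<Rightarrow> ('h \<Rightarrow> 'h \<Rightarrow> 'h) \<Rightarrow> 'h \<Rightarrow>
   ('h \<Rightarrow> ('h \<times> 'h) list) \<Rightarrow> ('h \<Rightarrow> 'k) \<Rightarrow>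
   ('k \<Rightarrow> 'a::ab_group_add \<Rightarrow> 'a) \<Rightarrow> ('a \<Rightarrow> 'a \<Rightarrow> 'a) \<Rightarrow> 'a \<Rightarrow> ('h \<Rightarrow> 'a \<Rightarrow> 'a) \<Rightarrow> bool" where
  "left_module_algebra sH mH uH \<Delta> \<epsilon> sA m u act \<longleftrightarrow>
     (\<forall>a. Vector_Spaces.linear sH sA (\<lambda>h. act h a)) \<and> (\<forall>h. Vector_Spaces.linear sA sA (act h)) \<and>
     (\<forall>h g a. act (mH h g) a = act h (act g a)) \<and> (\<forall>a. act uH a = a) \<and>
     (\<forall>h a b. act h (m a b) = sum_list (map (\<lambda>(p, q). m (act p a) (act q b)) (\<Delta> h))) \<and>
     (\<forall>h. act h u = sA (\<epsilon> h) u)"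

definition right_module_algebra ::
  "('k::field \<Rightarrow> 'h::ab_group_add \<Rightarrow> 'h) \<Rightarrow> ('h \<Rightarrow> 'h \<Rightarrow> 'h) \<Rightarrow> 'h \<Rightarrow>
   ('h \<Rightarrow> ('h \<times> 'h) list) \<Rightarrow> ('h \<Rightarrow> 'k) \<Rightarrow>
   ('k \<Rightarrow> 'a::ab_group_add \<Rightarrow> 'a) \<Rightarrow> ('a \<Rightarrow> 'a \<Rightarrow> 'a) \<Rightarrow> 'a \<Rightarrow> ('a \<Rightarrow> 'h \<Rightarrow> 'a) \<Rightarrow> bool" where
  "right_module_algebra sH mH uH \<Delta> \<epsilon> sA m u ract \<longleftrightarrow>
     (\<forall>a. Vector_Spaces.linear sH sA (ract a)) \<and> (\<forall>h. Vector_Spaces.linear sA sA (\<lambda>a. ract a h)) \<and>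
     (\<forall>h g a. ract a (mH h g) = ract (ract a h) g) \<and> (\<forall>a. ract a uH = a) \<and>
     (\<forall>h a b. ract (m a b) h = sum_list (map (\<lambda>(p, q). m (ract a p) (ract b q)) (\<Delta> h))) \<and>
     (\<forall>h. ract u h = sA (\<epsilon> h) u)"

definition left_comodule_algebra ::
  "('k::field \<Rightarrow> 'h::ab_group_add \<Rightarrow> 'h) \<Rightarrow> ('h \<Rightarrow> 'h \<Rightarrow> 'h) \<Rightarrow> 'h \<Rightarrow>
   ('h \<Rightarrow> ('h \<times> 'h) list) \<Rightarrow> ('h \<Rightarrow> 'k) \<Rightarrow>
   ('k \<Rightarrow> 'a::ab_group_add \<Rightarrow> 'a) \<Rightarrow> ('a \<Rightarrow> 'a \<Rightarrow> 'a) \<Rightarrow> 'a \<Rightarrow> ('a \<Rightarrow> ('h \<times> 'a) list) \<Rightarrow> bool" where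
  "left_comodule_algebra sH mH uH \<Delta> \<epsilon> sA m u \<psi> \<longleftrightarrow>
     (\<forall>a b. tensor_eq2 sH sA (\<psi> (a + b)) (\<psi> a @ \<psi> b)) \<and>
     (\<forall>c a. tensor_eq2 sH sA (\<psi> (sA c a)) (map (\<lambda>(h, x). (h, sA c x)) (\<psi> a))) \<and>
     (\<forall>a. tensor_eq3 sH sH sA
        [(h1, h2, x). (h, x) \<leftarrow> \<psi> a, (h1, h2) \<leftarrow> \<Delta> h]
        [(h, g, y). (h, x) \<leftarrow> \<psi> a, (g, y) \<leftarrow> \<psi> x]) \<and>
     (\<forall>a. sum_list (map (\<lambda>(h, x). sA (\<epsilon> h) x) (\<psi> a)) = a) \<and>
     (\<forall>a b. tensor_eq2 sH sA (\<psi> (m a b)) [(mH h g, m x y). (h, x) \<leftarrow> \<psi> a, (g, y) \<leftarrow> \<psi> b]) \<and>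
     tensor_eq2 sH sA (\<psi> u) [(uH, u)]"

definition right_comodule_algebra ::
  "('k::field \<Rightarrow> 'h::ab_group_add \<Rightarrow> 'h) \<Rightarrow> ('h \<Rightarrow> 'h \<Rightarrow> 'h) \<Rightarrow> 'h \<Rightarrow>
   ('h \<Rightarrow> ('h \<times> 'h) list) \<Rightarrow> ('h \<Rightarrow> 'k) \<Rightarrow>
   ('k \<Rightarrow> 'a::ab_group_add \<Rightarrow> 'a) \<Rightarrow> ('a \<Rightarrow> 'a \<Rightarrow> 'a) \<Rightarrow> 'a \<Rightarrow> ('a \<Rightarrow> ('a \<times> 'h) list) \<Rightarrow> bool" where
  "right_comodule_algebra sH mH uH \<Delta> \<epsilon> sA m u \<psi> \<longleftrightarrow>
     (\<forall>a b. tensor_eq2 sA sH (\<psi> (a + b)) (\<psi> a @ \<psi> b)) \<and>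
     (\<forall>c a. tensor_eq2 sA sH (\<psi> (sA c a)) (map (\<lambda>(x, h). (sA c x, h)) (\<psi> a))) \<and>
     (\<forall>a. tensor_eq3 sA sH sH
        [(y, g, h). (x, h) \<leftarrow> \<psi> a, (y, g) \<leftarrow> \<psi> x]
        [(x, h1, h2). (x, h) \<leftarrow> \<psi> a, (h1, h2) \<leftarrow> \<Delta> h]) \<and>
     (\<forall>a. sum_list (map (\<lambda>(x, h). sA (\<epsilon> h) x) (\<psi> a)) = a) \<and>
     (\<forall>a b. tensor_eq2 sA sH (\<psi> (m a b)) [(m x y, mH h g). (x, h) \<leftarrow> \<psi> a, (y, g) \<leftarrow> \<psi> b]) \<and>
     tensor_eq2 sA sH (\<psi> u) [(u, uH)]"

definition left_twisted_prod ::
  "('a::ab_group_add \<Rightarrow> 'a \<Rightarrow> 'a) \<Rightarrow> ('h \<Rightarrow> 'a \<Rightarrow> 'a) \<Rightarrow> ('a \<Rightarrow> ('h \<times> 'a) list) \<Rightarrow> 'a \<Rightarrow> 'a \<Rightarrow> 'a" where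
  "left_twisted_prod m act \<psi> a b = sum_list (map (\<lambda>(h, x). m x (act h b)) (\<psi> a))"

definition right_twisted_prod ::
  "('a::ab_group_add \<Rightarrow> 'a \<Rightarrow> 'a) \<Rightarrow> ('a \<Rightarrow> 'h \<Rightarrow> 'a) \<Rightarrow> ('a \<Rightarrow> ('a \<times> 'h) list) \<Rightarrow> 'a \<Rightarrow> 'a \<Rightarrow> 'a" where
  "right_twisted_prod m ract \<psi> a b = sum_list (map (\<lambda>(x, h). m (ract a h) x) (\<psi> b))"

definition lr_twisted_prod ::
  "('a::ab_group_add \<Rightarrow> 'a \<Rightarrow> 'a) \<Rightarrow> ('h \<Rightarrow> 'a \<Rightarrow> 'a) \<Rightarrow> ('a \<Rightarrow> 'h \<Rightarrow> 'a) \<Rightarrow>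
   ('a \<Rightarrow> ('h \<times> 'a) list) \<Rightarrow> ('a \<Rightarrow> ('a \<times> 'h) list) \<Rightarrow> 'a \<Rightarrow> 'a \<Rightarrow> 'a" where
  "lr_twisted_prod m act ract \<psi>l \<psi>r a b =
     sum_list (map (\<lambda>(h, x). sum_list (map (\<lambda>(y, g). m (ract x g) (act h y)) (\<psi>r b))) (\<psi>l a))"

definition left_twisting_datum ::
  "('k::field \<Rightarrow> 'h::ab_group_add \<Rightarrow> 'h) \<Rightarrow> ('h \<Rightarrow> 'h \<Rightarrow> 'h) \<Rightarrow> 'h \<Rightarrow>
   ('h \<Rightarrow> ('h \<times> 'h) list) \<Rightarrow> ('h \<Rightarrow> 'k) \<Rightarrow>
   ('k \<Rightarrow> 'a::ab_group_add \<Rightarrow> 'a) \<Rightarrow> ('a \<Rightarrow> 'a \<Rightarrow> 'a) \<Rightarrow> 'a \<Rightarrow>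
   ('h \<Rightarrow> 'a \<Rightarrow> 'a) \<Rightarrow> ('a \<Rightarrow> ('h \<times> 'a) list) \<Rightarrow> bool" where
  "left_twisting_datum sH mH uH \<Delta> \<epsilon> sA m u act \<psi> \<longleftrightarrow>
     bialgebra sH mH uH \<Delta> \<epsilon> \<and> k_algebra sA m u \<and>
     left_module_algebra sH mH uH \<Delta> \<epsilon> sA m u act \<and>
     left_comodule_algebra sH mH uH \<Delta> \<epsilon> sA m u \<psi> \<and>
     (\<forall>h a. tensor_eq2 sH sA (\<psi> (act h a)) (map (\<lambda>(g, x). (g, act h x)) (\<psi> a)))"

definition right_twisting_datum ::
  "('k::field \<Rightarrow> 'h::ab_group_add \<Rightarrow> 'h) \<Rightarrow> ('h \<Rightarrow> 'h \<Rightarrow> 'h) \<Rightarrow> 'h \<Rightarrow>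
   ('h \<Rightarrow> ('h \<times> 'h) list) \<Rightarrow> ('h \<Rightarrow> 'k) \<Rightarrow>
   ('k \<Rightarrow> 'a::ab_group_add \<Rightarrow> 'a) \<Rightarrow> ('a \<Rightarrow> 'a \<Rightarrow> 'a) \<Rightarrow> 'a \<Rightarrow>
   ('a \<Rightarrow> 'h \<Rightarrow> 'a) \<Rightarrow> ('a \<Rightarrow> ('a \<times> 'h) list) \<Rightarrow> bool" where
  "right_twisting_datum sH mH uH \<Delta> \<epsilon> sA m u ract \<psi> \<longleftrightarrow>
     bialgebra sH mH uH \<Delta> \<epsilon> \<and> k_algebra sA m u \<and>
     right_module_algebra sH mH uH \<Delta> \<epsilon> sA m u ract \<and>
     right_comodule_algebra sH mH uH \<Delta> \<epsilon> sA m u \<psi> \<and>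
     (\<forall>h a. tensor_eq2 sA sH (\<psi> (ract a h)) (map (\<lambda>(x, g). (ract x h, g)) (\<psi> a)))"

definition lr_twisting_datum ::
  "('k::field \<Rightarrow> 'h::ab_group_add \<Rightarrow> 'h) \<Rightarrow> ('h \<Rightarrow> 'h \<Rightarrow> 'h) \<Rightarrow> 'h \<Rightarrow>
   ('h \<Rightarrow> ('h \<times> 'h) list) \<Rightarrow> ('h \<Rightarrow> 'k) \<Rightarrow>
   ('k \<Rightarrow> 'a::ab_group_add \<Rightarrow> 'a) \<Rightarrow> ('a \<Rightarrow> 'a \<Rightarrow> 'a) \<Rightarrow> 'a \<Rightarrow>
   ('h \<Rightarrow> 'a \<Rightarrow> 'a) \<Rightarrow> ('a \<Rightarrow> 'h \<Rightarrow> 'a) \<Rightarrow>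
   ('a \<Rightarrow> ('h \<times> 'a) list) \<Rightarrow> ('a \<Rightarrow> ('a \<times> 'h) list) \<Rightarrow> bool" where
  "lr_twisting_datum sH mH uH \<Delta> \<epsilon> sA m u act ract \<psi>l \<psi>r \<longleftrightarrow>
     bialgebra sH mH uH \<Delta> \<epsilon> \<and> k_algebra sA m u \<and>
     \<comment> \<open>H-bimodule algebra\<close>
     left_module_algebra sH mH uH \<Delta> \<epsilon> sA m u act \<and>
     right_module_algebra sH mH uH \<Delta> \<epsilon> sA m u ract \<and>
     (\<forall>h a g. ract (act h a) g = act h (ract a g)) \<and>
     \<comment> \<open>H-bicomodule algebra\<close>
     left_comodule_algebra sH mH uH \<Delta> \<epsilon> sA m u \<psi>l \<and>
     right_comodule_algebra sH mH uH \<Delta> \<epsilon> sA m u \<psi>r \<and>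
     (\<forall>a. tensor_eq3 sH sA sH
        [(h, y, g). (h, x) \<leftarrow> \<psi>l a, (y, g) \<leftarrow> \<psi>r x]
        [(h, y, g). (x, g) \<leftarrow> \<psi>r a, (h, y) \<leftarrow> \<psi>l x]) \<and>
     \<comment> \<open>compatibilities\<close>
     (\<forall>h a. tensor_eq2 sH sA (\<psi>l (act h a)) (map (\<lambda>(g, x). (g, act h x)) (\<psi>l a))) \<and>
     (\<forall>h a. tensor_eq2 sA sH (\<psi>r (act h a)) (map (\<lambda>(x, g). (act h x, g)) (\<psi>r a))) \<and>
     (\<forall>h a. tensor_eq2 sH sA (\<psi>l (ract a h)) (map (\<lambda>(g, x). (g, ract x h)) (\<psi>l a))) \<and>
     (\<forall>h a. tensor_eq2 sA sH (\<psi>r (ract a h)) (map (\<lambda>(x, g). (ract x h, g)) (\<psi>r a)))"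

end

theory Submission
  imports Defs
begin

text \<open>
  Write every product as an iterated Sweedler sum: a \<star> b = a(0) (a(-1) . b) and
  a \<diamond> b = (a . b<1>) b<0>. Since \<psi>l commutes with the right action,
  (a . b<1>) \<star> b<0> = (a[0] . b<1>) (a[-1] . b<0>) = a \<bullet> b, and since \<psi>r commutes with the
  left action, a(0) \<diamond> (a(-1) . b) = a \<bullet> b as well. For (H, ract, \<psi>r) to be a right twisting
  datum on (A, \<star>) one needs that \<star> is associative (coassociativity of \<psi>l and the module-algebra
  axioms for act), that ract acts by algebra maps for \<star> (ract commutes with act and with \<psi>l),
  and that \<psi>r is multiplicative for \<star> (bicomodule coassociativity and \<psi>r commuting with act);
  the statement for (A, \<diamond>) is the mirror image.

  Equality of tensors is defined by pairing with scalar-valued multilinear forms. It is used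
  with multilinear maps into arbitrary vector spaces, which is legitimate because linear
  functionals separate points.
\<close>

section \<open>Sweedler sums and tensor identities\<close>

definition sum_pairs :: "('p \<times> 'q) list \<Rightarrow> ('p \<Rightarrow> 'q \<Rightarrow> 'x::comm_monoid_add) \<Rightarrow> 'x" where
  "sum_pairs L f = sum_list (map (\<lambda>(p, q). f p q) L)"

definition sum_triples :: "('p \<times> 'q \<times> 'r) list \<Rightarrow> ('p \<Rightarrow> 'q \<Rightarrow> 'r \<Rightarrow> 'x::comm_monoid_add) \<Rightarrow> 'x" where
  "sum_triples L f = sum_list (map (\<lambda>(p, q, r). f p q r) L)"

lemma sum_pairs_Nil [simp]: "sum_pairs [] f = 0"
  and sum_pairs_Cons [simp]: "sum_pairs ((p, q) # L) f = f p q + sum_pairs L f"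
  and sum_pairs_append [simp]: "sum_pairs (L @ M) f = sum_pairs L f + sum_pairs M f"
  by (simp_all add: sum_pairs_def)

lemma sum_triples_Nil [simp]: "sum_triples [] f = 0"
  and sum_triples_Cons [simp]: "sum_triples ((p, q, r) # L) f = f p q r + sum_triples L f"
  and sum_triples_append [simp]: "sum_triples (L @ M) f = sum_triples L f + sum_triples M f"
  by (simp_all add: sum_triples_def)

lemma sum_pairs_add: "sum_pairs L (\<lambda>p q. f p q + g p q) = sum_pairs L f + sum_pairs L g"
  by (induction L) (auto simp: algebra_simps)

lemma sum_pairs_zero [simp]: "sum_pairs L (\<lambda>p q. 0) = 0"
  by (induction L) auto

lemma sum_pairs_commute:
  "sum_pairs L (\<lambda>p q. sum_pairs M (\<lambda>r s. f p q r s)) = sum_pairs M (\<lambda>r s. sum_pairs L (\<lambda>p q. f p q r s))"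
  by (induction L) (auto simp: sum_pairs_add)

lemma sum_pairs_cong: "(\<And>p q. (p, q) \<in> set L \<Longrightarrow> f p q = g p q) \<Longrightarrow> sum_pairs L f = sum_pairs L g"
  by (induction L) auto

lemma sum_pairs_concat_map:
  "sum_pairs (concat (map (\<lambda>(p, q). G p q) L)) f = sum_pairs L (\<lambda>p q. sum_pairs (G p q) f)"
  by (induction L) auto

lemma sum_pairs_map:
  "sum_pairs (map (\<lambda>(p, q). (g p q, k p q)) L) f = sum_pairs L (\<lambda>p q. f (g p q) (k p q))"
  by (induction L) auto

lemma sum_triples_concat_map:
  "sum_triples (concat (map (\<lambda>(p, q). G p q) L)) f = sum_pairs L (\<lambda>p q. sum_triples (G p q) f)"
  by (induction L) auto

lemma sum_triples_map:
  "sum_triples (map (\<lambda>(p, q). (f p q, g p q, k p q)) L) \<gamma> = sum_pairs L (\<lambda>p q. \<gamma> (f p q) (g p q) (k p q))"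
  by (induction L) auto

lemma sum_triples_map_Pair: "sum_triples (map (Pair h) L) \<gamma> = sum_pairs L (\<gamma> h)"
  by (induction L) auto

lemma vector_space_times: "vector_space ((*) :: 'k::field \<Rightarrow> 'k \<Rightarrow> 'k)"
  by (simp add: vector_space_def algebra_simps)

lemma lin_add: "Vector_Spaces.linear s1 s2 f \<Longrightarrow> f (x + y) = f x + f y"
  and lin_scale: "Vector_Spaces.linear s1 s2 f \<Longrightarrow> f (s1 c x) = s2 c (f x)"
  by (simp_all add: Vector_Spaces.linear_iff)

lemma lin_zero: "Vector_Spaces.linear s1 s2 f \<Longrightarrow> f 0 = 0"
  using lin_add[of s1 s2 f 0 0] by simp

lemma lin_id: "vector_space s \<Longrightarrow> Vector_Spaces.linear s s (\<lambda>x. x)"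
  by (simp add: Vector_Spaces.linear_iff)

lemma lin_compose: "Vector_Spaces.linear s1 s2 f \<Longrightarrow> Vector_Spaces.linear s2 s3 g \<Longrightarrow>
    Vector_Spaces.linear s1 s3 (\<lambda>x. g (f x))"
  by (simp add: Vector_Spaces.linear_iff)

lemma lin_add_fun: "Vector_Spaces.linear s1 s2 f \<Longrightarrow> Vector_Spaces.linear s1 s2 g \<Longrightarrow>
    Vector_Spaces.linear s1 s2 (\<lambda>x. f x + g x)"
  by (simp add: Vector_Spaces.linear_iff module.scale_right_distrib module_iff_vector_space algebra_simps)

lemma lin_zero_fun: "vector_space s1 \<Longrightarrow> vector_space s2 \<Longrightarrow> Vector_Spaces.linear s1 s2 (\<lambda>x. 0)"
  by (simp add: Vector_Spaces.linear_iff module.scale_zero_right module_iff_vector_space)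

lemma lin_scale_fun: "vector_space s \<Longrightarrow> Vector_Spaces.linear s s (s c)"
  by (simp add: Vector_Spaces.linear_iff module.scale_right_distrib module.scale_scale
      module_iff_vector_space mult.commute)

lemma linear_sum_pairs: "Vector_Spaces.linear s1 s2 f \<Longrightarrow> f (sum_pairs L g) = sum_pairs L (\<lambda>p q. f (g p q))"
  by (induction L) (auto simp: lin_add lin_zero)

lemma linear_sum_triples:
  "Vector_Spaces.linear s1 s2 f \<Longrightarrow> f (sum_triples L g) = sum_triples L (\<lambda>p q r. f (g p q r))"
  by (induction L) (auto simp: lin_add lin_zero)

lemma linear_sum_pairs_fun: "vector_space s1 \<Longrightarrow> vector_space s2 \<Longrightarrow>
    (\<And>p q. Vector_Spaces.linear s1 s2 (\<lambda>v. F p q v)) \<Longrightarrow>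
    Vector_Spaces.linear s1 s2 (\<lambda>v. sum_pairs L (\<lambda>p q. F p q v))"
proof (induction L)
  case Nil
  then show ?case by (simp add: lin_zero_fun)
next
  case (Cons pq L)
  then show ?case by (cases pq) (simp add: lin_add_fun)
qed

lemma linear_functionals_eqI:
  assumes vs: "vector_space s"
    and eq: "\<And>f. Vector_Spaces.linear s (*) f \<Longrightarrow> f x = f y"
  shows "x = y"
proof (rule ccontr)
  interpret V: vector_space s by (rule vs)
  assume "x \<noteq> y"
  then have indep: "V.independent {x - y}" by simp
  define B where "B = V.extend_basis {x - y}"
  have iB: "V.independent B" unfolding B_def by (rule V.independent_extend_basis[OF indep])
  have "V.span B = UNIV" unfolding B_def by (rule V.span_extend_basis[OF indep])
  then have lf: "Vector_Spaces.linear s (*) (\<lambda>v. V.representation B v (x - y))"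
    unfolding Vector_Spaces.linear_iff
    using vs vector_space_times V.representation_add[OF iB] V.representation_scale[OF iB] by auto
  have "x - y \<in> B" unfolding B_def using V.extend_basis_superset[OF indep] by auto
  then have "V.representation B (x - y) (x - y) = 1" using V.representation_basis[OF iB] by simp
  moreover have "V.representation B (x - y) (x - y) = V.representation B x (x - y) - V.representation B y (x - y)"
    using lin_add[OF lf, of "x - y" y] by simp
  ultimately show False using eq[OF lf] by simp
qed

definition bilinear_map ::
  "('k::field \<Rightarrow> 'v::ab_group_add \<Rightarrow> 'v) \<Rightarrow> ('k \<Rightarrow> 'w::ab_group_add \<Rightarrow> 'w) \<Rightarrow>
   ('k \<Rightarrow> 'x::ab_group_add \<Rightarrow> 'x) \<Rightarrow> ('v \<Rightarrow> 'w \<Rightarrow> 'x) \<Rightarrow> bool" where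
  "bilinear_map sV sW sX \<beta> \<longleftrightarrow>
     (\<forall>w. Vector_Spaces.linear sV sX (\<lambda>v. \<beta> v w)) \<and> (\<forall>v. Vector_Spaces.linear sW sX (\<beta> v))"

definition trilinear_map ::
  "('k::field \<Rightarrow> 'u::ab_group_add \<Rightarrow> 'u) \<Rightarrow> ('k \<Rightarrow> 'v::ab_group_add \<Rightarrow> 'v) \<Rightarrow>
   ('k \<Rightarrow> 'w::ab_group_add \<Rightarrow> 'w) \<Rightarrow> ('k \<Rightarrow> 'x::ab_group_add \<Rightarrow> 'x) \<Rightarrow> ('u \<Rightarrow> 'v \<Rightarrow> 'w \<Rightarrow> 'x) \<Rightarrow> bool" where
  "trilinear_map sU sV sW sX \<gamma> \<longleftrightarrow>
     (\<forall>v w. Vector_Spaces.linear sU sX (\<lambda>u. \<gamma> u v w)) \<and>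
     (\<forall>u w. Vector_Spaces.linear sV sX (\<lambda>v. \<gamma> u v w)) \<and>
     (\<forall>u v. Vector_Spaces.linear sW sX (\<lambda>w. \<gamma> u v w))"

lemma bilinear_map_compose_left:
  "bilinear_map sV sW sX \<beta> \<Longrightarrow> Vector_Spaces.linear s sV F \<Longrightarrow> Vector_Spaces.linear s sX (\<lambda>v. \<beta> (F v) w)"
  unfolding bilinear_map_def by (rule lin_compose[where g = "\<lambda>v. \<beta> v w"]) auto

lemma bilinear_map_compose_right:
  "bilinear_map sV sW sX \<beta> \<Longrightarrow> Vector_Spaces.linear s sW F \<Longrightarrow> Vector_Spaces.linear s sX (\<lambda>v. \<beta> w (F v))"
  unfolding bilinear_map_def by (rule lin_compose[where g = "\<beta> w"]) auto

lemma bilinear_map_sum_pairs_left: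
  "bilinear_map sV sW sX \<beta> \<Longrightarrow> \<beta> (sum_pairs L f) w = sum_pairs L (\<lambda>p q. \<beta> (f p q) w)"
  unfolding bilinear_map_def by (intro linear_sum_pairs) blast

lemma bilinear_map_sum_pairs_right:
  "bilinear_map sV sW sX \<beta> \<Longrightarrow> \<beta> v (sum_pairs L f) = sum_pairs L (\<lambda>p q. \<beta> v (f p q))"
  unfolding bilinear_map_def by (intro linear_sum_pairs) blast

lemma bilinear_map_scale_left: "bilinear_map sV sW sX \<beta> \<Longrightarrow> \<beta> (sV c v) w = sX c (\<beta> v w)"
  unfolding bilinear_map_def using lin_scale[of sV sX "\<lambda>v. \<beta> v w"] by blast

lemma bilinear_map_scale_right: "bilinear_map sV sW sX \<beta> \<Longrightarrow> \<beta> v (sW c w) = sX c (\<beta> v w)"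
  unfolding bilinear_map_def by (blast intro: lin_scale)

lemma bilinear_form_iff: "bilinear_form sV sW \<beta> \<longleftrightarrow> bilinear_map sV sW (*) \<beta>"
  by (simp add: bilinear_form_def bilinear_map_def)

lemma trilinear_form_iff: "trilinear_form sU sV sW \<gamma> \<longleftrightarrow> trilinear_map sU sV sW (*) \<gamma>"
  by (simp add: trilinear_form_def trilinear_map_def)

lemma tensor_eq2_sum_pairs:
  assumes "tensor_eq2 sV sW xs ys" "vector_space sX" "bilinear_map sV sW sX \<beta>"
  shows "sum_pairs xs \<beta> = sum_pairs ys \<beta>"
proof (rule linear_functionals_eqI[OF assms(2)])
  fix f assume f: "Vector_Spaces.linear sX (*) f"
  have "bilinear_form sV sW (\<lambda>v w. f (\<beta> v w))"
    using assms(3) f unfolding bilinear_form_iff bilinear_map_def by (simp add: lin_compose[OF _ f])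
  then have "sum_pairs xs (\<lambda>v w. f (\<beta> v w)) = sum_pairs ys (\<lambda>v w. f (\<beta> v w))"
    using assms(1) unfolding tensor_eq2_def sum_pairs_def by blast
  then show "f (sum_pairs xs \<beta>) = f (sum_pairs ys \<beta>)" by (simp add: linear_sum_pairs[OF f])
qed

lemma tensor_eq3_sum_triples:
  assumes "tensor_eq3 sU sV sW xs ys" "vector_space sX" "trilinear_map sU sV sW sX \<gamma>"
  shows "sum_triples xs \<gamma> = sum_triples ys \<gamma>"
proof (rule linear_functionals_eqI[OF assms(2)])
  fix f assume f: "Vector_Spaces.linear sX (*) f"
  have "trilinear_form sU sV sW (\<lambda>u v w. f (\<gamma> u v w))"
    using assms(3) f unfolding trilinear_form_iff trilinear_map_def by (simp add: lin_compose[OF _ f])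
  then have "sum_triples xs (\<lambda>u v w. f (\<gamma> u v w)) = sum_triples ys (\<lambda>u v w. f (\<gamma> u v w))"
    using assms(1) unfolding tensor_eq3_def sum_triples_def by blast
  then show "f (sum_triples xs \<gamma>) = f (sum_triples ys \<gamma>)" by (simp add: linear_sum_triples[OF f])
qed

lemma tensor_eq2I:
  "(\<And>\<beta>. bilinear_map sV sW (*) \<beta> \<Longrightarrow> sum_pairs xs \<beta> = sum_pairs ys \<beta>) \<Longrightarrow> tensor_eq2 sV sW xs ys"
  unfolding tensor_eq2_def bilinear_form_iff sum_pairs_def by blast

section \<open>Left twisted algebras\<close>

lemma left_twisted_prod_eq: "left_twisted_prod m act \<psi> a b = sum_pairs (\<psi> a) (\<lambda>h x. m x (act h b))"
  by (simp add: left_twisted_prod_def sum_pairs_def)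

locale left_twisting =
  fixes sH :: "'k::field \<Rightarrow> 'h::ab_group_add \<Rightarrow> 'h"
    and mH :: "'h \<Rightarrow> 'h \<Rightarrow> 'h" and uH :: 'h
    and \<Delta> :: "'h \<Rightarrow> ('h \<times> 'h) list" and \<epsilon> :: "'h \<Rightarrow> 'k"
    and sA :: "'k \<Rightarrow> 'a::ab_group_add \<Rightarrow> 'a"
    and m :: "'a \<Rightarrow> 'a \<Rightarrow> 'a" and u :: 'a
    and act :: "'h \<Rightarrow> 'a \<Rightarrow> 'a" and \<psi> :: "'a \<Rightarrow> ('h \<times> 'a) list"
  assumes datum: "left_twisting_datum sH mH uH \<Delta> \<epsilon> sA m u act \<psi>"
begin

lemma vector_space_H: "vector_space sH"
  and bilinear_mH: "bilinear_map sH sH sH mH"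
  using datum by (simp_all add: left_twisting_datum_def bialgebra_def k_algebra_def bilinear_map_def)

lemma vector_space_A: "vector_space sA"
  and bilinear_m: "bilinear_map sA sA sA m"
  and m_assoc: "m (m a b) c = m a (m b c)"
  and m_u_left: "m u a = a" and m_u_right: "m a u = a"
  using datum by (simp_all add: left_twisting_datum_def k_algebra_def bilinear_map_def)

lemma bilinear_act: "bilinear_map sH sA sA act"
  and act_mH: "act (mH h g) a = act h (act g a)"
  and act_uH: "act uH a = a"
  and act_m: "act h (m a b) = sum_pairs (\<Delta> h) (\<lambda>p q. m (act p a) (act q b))"
  and act_u: "act h u = sA (\<epsilon> h) u"
  using datum
  by (simp_all add: left_twisting_datum_def left_module_algebra_def bilinear_map_def sum_pairs_def)

lemma coaction_add: "tensor_eq2 sH sA (\<psi> (a + b)) (\<psi> a @ \<psi> b)"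
  and coaction_scale: "tensor_eq2 sH sA (\<psi> (sA c a)) (map (\<lambda>(h, x). (h, sA c x)) (\<psi> a))"
  and coaction_coassoc: "tensor_eq3 sH sH sA
        [(h1, h2, x). (h, x) \<leftarrow> \<psi> a, (h1, h2) \<leftarrow> \<Delta> h]
        [(h, g, y). (h, x) \<leftarrow> \<psi> a, (g, y) \<leftarrow> \<psi> x]"
  and coaction_counit: "sum_pairs (\<psi> a) (\<lambda>h x. sA (\<epsilon> h) x) = a"
  and coaction_m: "tensor_eq2 sH sA (\<psi> (m a b)) [(mH h g, m x y). (h, x) \<leftarrow> \<psi> a, (g, y) \<leftarrow> \<psi> b]"
  and coaction_u: "tensor_eq2 sH sA (\<psi> u) [(uH, u)]"
  and coaction_act: "tensor_eq2 sH sA (\<psi> (act h a)) (map (\<lambda>(g, x). (g, act h x)) (\<psi> a))"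
  using datum by (simp_all add: left_twisting_datum_def left_comodule_algebra_def sum_pairs_def)

context
  fixes sX :: "'k \<Rightarrow> 'x::ab_group_add \<Rightarrow> 'x"
  assumes vs_X: "vector_space sX"
begin

context
  fixes \<beta> :: "'h \<Rightarrow> 'a \<Rightarrow> 'x"
  assumes \<beta>: "bilinear_map sH sA sX \<beta>"
begin

lemma linear_sum_coaction: "Vector_Spaces.linear sA sX (\<lambda>a. sum_pairs (\<psi> a) \<beta>)"
proof -
  have "sum_pairs (\<psi> (sA c a)) \<beta> = sX c (sum_pairs (\<psi> a) \<beta>)" for c a
  proof -
    have "sum_pairs (\<psi> (sA c a)) \<beta> = sum_pairs (\<psi> a) (\<lambda>h x. \<beta> h (sA c x))"
      using tensor_eq2_sum_pairs[OF coaction_scale vs_X \<beta>] by (simp add: sum_pairs_map)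
    also have "\<dots> = sum_pairs (\<psi> a) (\<lambda>h x. sX c (\<beta> h x))"
      by (simp add: bilinear_map_scale_right[OF \<beta>])
    finally show ?thesis by (simp add: linear_sum_pairs[OF lin_scale_fun[OF vs_X]])
  qed
  moreover have "sum_pairs (\<psi> (a + b)) \<beta> = sum_pairs (\<psi> a) \<beta> + sum_pairs (\<psi> b) \<beta>" for a b
    using tensor_eq2_sum_pairs[OF coaction_add vs_X \<beta>] by simp
  ultimately show ?thesis
    using vector_space_A vs_X by (simp add: Vector_Spaces.linear_iff)
qed

lemma sum_coaction_m:
  "sum_pairs (\<psi> (m a b)) \<beta> = sum_pairs (\<psi> a) (\<lambda>h x. sum_pairs (\<psi> b) (\<lambda>g y. \<beta> (mH h g) (m x y)))"
  using tensor_eq2_sum_pairs[OF coaction_m vs_X \<beta>] by (simp add: sum_pairs_concat_map sum_pairs_map)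

lemma sum_coaction_act: "sum_pairs (\<psi> (act k a)) \<beta> = sum_pairs (\<psi> a) (\<lambda>h x. \<beta> h (act k x))"
  using tensor_eq2_sum_pairs[OF coaction_act vs_X \<beta>] by (simp add: sum_pairs_map)

lemma sum_coaction_u: "sum_pairs (\<psi> u) \<beta> = \<beta> uH u"
  using tensor_eq2_sum_pairs[OF coaction_u vs_X \<beta>] by simp

lemma sum_coaction_sum_pairs:
  "sum_pairs (\<psi> (sum_pairs L f)) \<beta> = sum_pairs L (\<lambda>p q. sum_pairs (\<psi> (f p q)) \<beta>)"
  by (rule linear_sum_pairs[OF linear_sum_coaction])

end

lemma sum_coaction_coassoc:
  "trilinear_map sH sH sA sX \<gamma> \<Longrightarrow>
    sum_pairs (\<psi> a) (\<lambda>h x. sum_pairs (\<Delta> h) (\<lambda>h1 h2. \<gamma> h1 h2 x)) =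
    sum_pairs (\<psi> a) (\<lambda>h x. sum_pairs (\<psi> x) (\<lambda>g y. \<gamma> h g y))"
  using tensor_eq3_sum_triples[OF coaction_coassoc vs_X]
  by (simp add: sum_triples_concat_map sum_triples_map sum_triples_map_Pair)

end

lemma linear_sum_coaction_compose:
  "vector_space sX \<Longrightarrow> bilinear_map sH sA sX \<beta> \<Longrightarrow> Vector_Spaces.linear s sA F \<Longrightarrow>
    Vector_Spaces.linear s sX (\<lambda>v. sum_pairs (\<psi> (F v)) \<beta>)"
  by (rule lin_compose[OF _ linear_sum_coaction])

lemmas linearity =
  bilinear_map_def trilinear_map_def vector_space_A vector_space_H vector_space_times lin_id
  linear_sum_pairs_fun linear_sum_coaction_compose
  bilinear_map_compose_left[OF bilinear_m] bilinear_map_compose_right[OF bilinear_m]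
  bilinear_map_compose_left[OF bilinear_mH] bilinear_map_compose_right[OF bilinear_mH]
  bilinear_map_compose_left[OF bilinear_act] bilinear_map_compose_right[OF bilinear_act]

lemmas sum_pairs_distrib =
  bilinear_map_sum_pairs_left[OF bilinear_m] bilinear_map_sum_pairs_right[OF bilinear_m]
  bilinear_map_sum_pairs_right[OF bilinear_act]

abbreviation twisted_prod :: "'a \<Rightarrow> 'a \<Rightarrow> 'a" (infixl \<open>\<star>\<close> 70)
  where "a \<star> b \<equiv> left_twisted_prod m act \<psi> a b"

lemma twisted_prod_assoc: "(a \<star> b) \<star> c = a \<star> (b \<star> c)"
proof -
  have "(a \<star> b) \<star> c = sum_pairs (\<psi> a) (\<lambda>k z. sum_pairs (\<psi> z) (\<lambda>h z'.
      sum_pairs (\<psi> b) (\<lambda>g y. m (m z' (act k y)) (act (mH h g) c))))"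
    unfolding left_twisted_prod_eq
    by (simp add: sum_coaction_sum_pairs[OF vector_space_A] sum_coaction_m[OF vector_space_A]
        sum_coaction_act[OF vector_space_A] linearity)
  also have "\<dots> = sum_pairs (\<psi> a) (\<lambda>k z. sum_pairs (\<Delta> k) (\<lambda>k1 k2.
      sum_pairs (\<psi> b) (\<lambda>g y. m (m z (act k1 y)) (act (mH k2 g) c))))"
    by (rule sum_coaction_coassoc[OF vector_space_A, symmetric]) (simp add: linearity)
  also have "\<dots> = a \<star> (b \<star> c)"
    unfolding left_twisted_prod_eq
    by (simp add: sum_pairs_distrib act_m act_mH m_assoc sum_pairs_commute[of "\<Delta> _"])
  finally show ?thesis .
qed

lemma twisted_algebra: "k_algebra sA (\<star>) u"
proof -
  have "u \<star> a = a" for a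
    by (simp add: left_twisted_prod_eq sum_coaction_u[OF vector_space_A] linearity m_u_left act_uH)
  moreover have "a \<star> u = a" for a
    by (simp add: left_twisted_prod_eq act_u bilinear_map_scale_right[OF bilinear_m] m_u_right coaction_counit)
  ultimately show ?thesis
    unfolding k_algebra_def using twisted_prod_assoc vector_space_A
    by (simp add: left_twisted_prod_eq[abs_def] linearity)
qed

end

section \<open>Right twisted algebras\<close>

lemma right_twisted_prod_eq: "right_twisted_prod m ract \<psi> a b = sum_pairs (\<psi> b) (\<lambda>x h. m (ract a h) x)"
  by (simp add: right_twisted_prod_def sum_pairs_def)

locale right_twisting =
  fixes sH :: "'k::field \<Rightarrow> 'h::ab_group_add \<Rightarrow> 'h"
    and mH :: "'h \<Rightarrow> 'h \<Rightarrow> 'h" and uH :: 'h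
    and \<Delta> :: "'h \<Rightarrow> ('h \<times> 'h) list" and \<epsilon> :: "'h \<Rightarrow> 'k"
    and sA :: "'k \<Rightarrow> 'a::ab_group_add \<Rightarrow> 'a"
    and m :: "'a \<Rightarrow> 'a \<Rightarrow> 'a" and u :: 'a
    and ract :: "'a \<Rightarrow> 'h \<Rightarrow> 'a" and \<psi> :: "'a \<Rightarrow> ('a \<times> 'h) list"
  assumes datum: "right_twisting_datum sH mH uH \<Delta> \<epsilon> sA m u ract \<psi>"
begin

lemma vector_space_H: "vector_space sH"
  and bilinear_mH: "bilinear_map sH sH sH mH"
  using datum by (simp_all add: right_twisting_datum_def bialgebra_def k_algebra_def bilinear_map_def)

lemma vector_space_A: "vector_space sA"
  and bilinear_m: "bilinear_map sA sA sA m"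
  and m_assoc: "m (m a b) c = m a (m b c)"
  and m_u_left: "m u a = a" and m_u_right: "m a u = a"
  using datum by (simp_all add: right_twisting_datum_def k_algebra_def bilinear_map_def)

lemma bilinear_ract: "bilinear_map sA sH sA ract"
  and ract_mH: "ract a (mH h g) = ract (ract a h) g"
  and ract_uH: "ract a uH = a"
  and ract_m: "ract (m a b) h = sum_pairs (\<Delta> h) (\<lambda>p q. m (ract a p) (ract b q))"
  and ract_u: "ract u h = sA (\<epsilon> h) u"
  using datum
  by (simp_all add: right_twisting_datum_def right_module_algebra_def bilinear_map_def sum_pairs_def)

lemma coaction_add: "tensor_eq2 sA sH (\<psi> (a + b)) (\<psi> a @ \<psi> b)"
  and coaction_scale: "tensor_eq2 sA sH (\<psi> (sA c a)) (map (\<lambda>(x, h). (sA c x, h)) (\<psi> a))"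
  and coaction_coassoc: "tensor_eq3 sA sH sH
        [(y, g, h). (x, h) \<leftarrow> \<psi> a, (y, g) \<leftarrow> \<psi> x]
        [(x, h1, h2). (x, h) \<leftarrow> \<psi> a, (h1, h2) \<leftarrow> \<Delta> h]"
  and coaction_counit: "sum_pairs (\<psi> a) (\<lambda>x h. sA (\<epsilon> h) x) = a"
  and coaction_m: "tensor_eq2 sA sH (\<psi> (m a b)) [(m x y, mH h g). (x, h) \<leftarrow> \<psi> a, (y, g) \<leftarrow> \<psi> b]"
  and coaction_u: "tensor_eq2 sA sH (\<psi> u) [(u, uH)]"
  and coaction_ract: "tensor_eq2 sA sH (\<psi> (ract a h)) (map (\<lambda>(x, g). (ract x h, g)) (\<psi> a))"
  using datum by (simp_all add: right_twisting_datum_def right_comodule_algebra_def sum_pairs_def)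

context
  fixes sX :: "'k \<Rightarrow> 'x::ab_group_add \<Rightarrow> 'x"
  assumes vs_X: "vector_space sX"
begin

context
  fixes \<beta> :: "'a \<Rightarrow> 'h \<Rightarrow> 'x"
  assumes \<beta>: "bilinear_map sA sH sX \<beta>"
begin

lemma linear_sum_coaction: "Vector_Spaces.linear sA sX (\<lambda>a. sum_pairs (\<psi> a) \<beta>)"
proof -
  have "sum_pairs (\<psi> (sA c a)) \<beta> = sX c (sum_pairs (\<psi> a) \<beta>)" for c a
  proof -
    have "sum_pairs (\<psi> (sA c a)) \<beta> = sum_pairs (\<psi> a) (\<lambda>x h. \<beta> (sA c x) h)"
      using tensor_eq2_sum_pairs[OF coaction_scale vs_X \<beta>] by (simp add: sum_pairs_map)
    also have "\<dots> = sum_pairs (\<psi> a) (\<lambda>x h. sX c (\<beta> x h))"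
      by (simp add: bilinear_map_scale_left[OF \<beta>])
    finally show ?thesis by (simp add: linear_sum_pairs[OF lin_scale_fun[OF vs_X]])
  qed
  moreover have "sum_pairs (\<psi> (a + b)) \<beta> = sum_pairs (\<psi> a) \<beta> + sum_pairs (\<psi> b) \<beta>" for a b
    using tensor_eq2_sum_pairs[OF coaction_add vs_X \<beta>] by simp
  ultimately show ?thesis
    using vector_space_A vs_X by (simp add: Vector_Spaces.linear_iff)
qed

lemma sum_coaction_m:
  "sum_pairs (\<psi> (m a b)) \<beta> = sum_pairs (\<psi> a) (\<lambda>x h. sum_pairs (\<psi> b) (\<lambda>y g. \<beta> (m x y) (mH h g)))"
  using tensor_eq2_sum_pairs[OF coaction_m vs_X \<beta>] by (simp add: sum_pairs_concat_map sum_pairs_map)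

lemma sum_coaction_ract: "sum_pairs (\<psi> (ract a k)) \<beta> = sum_pairs (\<psi> a) (\<lambda>x h. \<beta> (ract x k) h)"
  using tensor_eq2_sum_pairs[OF coaction_ract vs_X \<beta>] by (simp add: sum_pairs_map)

lemma sum_coaction_u: "sum_pairs (\<psi> u) \<beta> = \<beta> u uH"
  using tensor_eq2_sum_pairs[OF coaction_u vs_X \<beta>] by simp

lemma sum_coaction_sum_pairs:
  "sum_pairs (\<psi> (sum_pairs L f)) \<beta> = sum_pairs L (\<lambda>p q. sum_pairs (\<psi> (f p q)) \<beta>)"
  by (rule linear_sum_pairs[OF linear_sum_coaction])

end

lemma sum_coaction_coassoc:
  "trilinear_map sA sH sH sX \<gamma> \<Longrightarrow>
    sum_pairs (\<psi> a) (\<lambda>x h. sum_pairs (\<psi> x) (\<lambda>y g. \<gamma> y g h)) =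
    sum_pairs (\<psi> a) (\<lambda>x h. sum_pairs (\<Delta> h) (\<lambda>h1 h2. \<gamma> x h1 h2))"
  using tensor_eq3_sum_triples[OF coaction_coassoc vs_X]
  by (simp add: sum_triples_concat_map sum_triples_map sum_triples_map_Pair)

end

lemma linear_sum_coaction_compose:
  "vector_space sX \<Longrightarrow> bilinear_map sA sH sX \<beta> \<Longrightarrow> Vector_Spaces.linear s sA F \<Longrightarrow>
    Vector_Spaces.linear s sX (\<lambda>v. sum_pairs (\<psi> (F v)) \<beta>)"
  by (rule lin_compose[OF _ linear_sum_coaction])

lemmas linearity =
  bilinear_map_def trilinear_map_def vector_space_A vector_space_H vector_space_times lin_id
  linear_sum_pairs_fun linear_sum_coaction_compose
  bilinear_map_compose_left[OF bilinear_m] bilinear_map_compose_right[OF bilinear_m]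
  bilinear_map_compose_left[OF bilinear_mH] bilinear_map_compose_right[OF bilinear_mH]
  bilinear_map_compose_left[OF bilinear_ract] bilinear_map_compose_right[OF bilinear_ract]

lemmas sum_pairs_distrib =
  bilinear_map_sum_pairs_left[OF bilinear_m] bilinear_map_sum_pairs_right[OF bilinear_m]
  bilinear_map_sum_pairs_left[OF bilinear_ract]

abbreviation twisted_prod :: "'a \<Rightarrow> 'a \<Rightarrow> 'a" (infixl \<open>\<diamond>\<close> 70)
  where "a \<diamond> b \<equiv> right_twisted_prod m ract \<psi> a b"

lemma twisted_prod_assoc: "(a \<diamond> b) \<diamond> c = a \<diamond> (b \<diamond> c)"
proof -
  have "a \<diamond> (b \<diamond> c) = sum_pairs (\<psi> c) (\<lambda>x h. sum_pairs (\<psi> x) (\<lambda>x' h'.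
      sum_pairs (\<psi> b) (\<lambda>y g. m (ract a (mH g h')) (m (ract y h) x'))))"
    unfolding right_twisted_prod_eq
    by (simp add: sum_coaction_sum_pairs[OF vector_space_A] sum_coaction_m[OF vector_space_A]
        sum_coaction_ract[OF vector_space_A] linearity sum_pairs_commute[of "\<psi> b"])
  also have "\<dots> = sum_pairs (\<psi> c) (\<lambda>x h. sum_pairs (\<Delta> h) (\<lambda>h1 h2.
      sum_pairs (\<psi> b) (\<lambda>y g. m (ract a (mH g h1)) (m (ract y h2) x))))"
    by (rule sum_coaction_coassoc[OF vector_space_A]) (simp add: linearity)
  also have "\<dots> = (a \<diamond> b) \<diamond> c"
    unfolding right_twisted_prod_eq
    by (simp add: sum_pairs_distrib ract_m ract_mH m_assoc sum_pairs_commute[of "\<Delta> _"])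
  finally show ?thesis by simp
qed

lemma twisted_algebra: "k_algebra sA (\<diamond>) u"
proof -
  have "a \<diamond> u = a" for a
    by (simp add: right_twisted_prod_eq sum_coaction_u[OF vector_space_A] linearity m_u_right ract_uH)
  moreover have "u \<diamond> a = a" for a
    by (simp add: right_twisted_prod_eq ract_u bilinear_map_scale_left[OF bilinear_m] m_u_left coaction_counit)
  ultimately show ?thesis
    unfolding k_algebra_def using twisted_prod_assoc vector_space_A
    by (simp add: right_twisted_prod_eq[abs_def] linearity)
qed

end

section \<open>Twisting a twisted algebra\<close>

lemma lr_twisted_prod_eq: "lr_twisted_prod m act ract \<psi>l \<psi>r a b =
    sum_pairs (\<psi>l a) (\<lambda>h x. sum_pairs (\<psi>r b) (\<lambda>y g. m (ract x g) (act h y)))"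
  by (simp add: lr_twisted_prod_def sum_pairs_def)

locale lr_twisting =
  fixes sH :: "'k::field \<Rightarrow> 'h::ab_group_add \<Rightarrow> 'h"
    and mH :: "'h \<Rightarrow> 'h \<Rightarrow> 'h" and uH :: 'h
    and \<Delta> :: "'h \<Rightarrow> ('h \<times> 'h) list" and \<epsilon> :: "'h \<Rightarrow> 'k"
    and sA :: "'k \<Rightarrow> 'a::ab_group_add \<Rightarrow> 'a"
    and m :: "'a \<Rightarrow> 'a \<Rightarrow> 'a" and u :: 'a
    and act :: "'h \<Rightarrow> 'a \<Rightarrow> 'a" and ract :: "'a \<Rightarrow> 'h \<Rightarrow> 'a"
    and \<psi>l :: "'a \<Rightarrow> ('h \<times> 'a) list" and \<psi>r :: "'a \<Rightarrow> ('a \<times> 'h) list"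
  assumes datum: "lr_twisting_datum sH mH uH \<Delta> \<epsilon> sA m u act ract \<psi>l \<psi>r"
begin

sublocale L: left_twisting sH mH uH \<Delta> \<epsilon> sA m u act \<psi>l
  using datum by unfold_locales (simp add: lr_twisting_datum_def left_twisting_datum_def)

sublocale R: right_twisting sH mH uH \<Delta> \<epsilon> sA m u ract \<psi>r
  using datum by unfold_locales (simp add: lr_twisting_datum_def right_twisting_datum_def)

lemma act_ract_commute: "ract (act h a) g = act h (ract a g)"
  and bicoaction_coassoc: "tensor_eq3 sH sA sH
        [(h, y, g). (h, x) \<leftarrow> \<psi>l a, (y, g) \<leftarrow> \<psi>r x]
        [(h, y, g). (x, g) \<leftarrow> \<psi>r a, (h, y) \<leftarrow> \<psi>l x]"
  and left_coaction_ract: "tensor_eq2 sH sA (\<psi>l (ract a h)) (map (\<lambda>(g, x). (g, ract x h)) (\<psi>l a))"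
  and right_coaction_act: "tensor_eq2 sA sH (\<psi>r (act h a)) (map (\<lambda>(x, g). (act h x, g)) (\<psi>r a))"
  using datum by (simp_all add: lr_twisting_datum_def)

lemma sum_bicoaction_coassoc:
  "vector_space sX \<Longrightarrow> trilinear_map sH sA sH sX \<gamma> \<Longrightarrow>
    sum_pairs (\<psi>l a) (\<lambda>h x. sum_pairs (\<psi>r x) (\<lambda>y g. \<gamma> h y g)) =
    sum_pairs (\<psi>r a) (\<lambda>x g. sum_pairs (\<psi>l x) (\<lambda>h y. \<gamma> h y g))"
  using tensor_eq3_sum_triples[OF bicoaction_coassoc]
  by (simp add: sum_triples_concat_map sum_triples_map sum_triples_map_Pair)

lemma sum_left_coaction_ract:
  "vector_space sX \<Longrightarrow> bilinear_map sH sA sX \<beta> \<Longrightarrow>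
    sum_pairs (\<psi>l (ract a k)) \<beta> = sum_pairs (\<psi>l a) (\<lambda>h x. \<beta> h (ract x k))"
  using tensor_eq2_sum_pairs[OF left_coaction_ract] by (simp add: sum_pairs_map)

lemma sum_right_coaction_act:
  "vector_space sX \<Longrightarrow> bilinear_map sA sH sX \<beta> \<Longrightarrow>
    sum_pairs (\<psi>r (act k a)) \<beta> = sum_pairs (\<psi>r a) (\<lambda>x h. \<beta> (act k x) h)"
  using tensor_eq2_sum_pairs[OF right_coaction_act] by (simp add: sum_pairs_map)

lemmas linearity = L.linearity R.linearity

abbreviation left_twisted :: "'a \<Rightarrow> 'a \<Rightarrow> 'a" (infixl \<open>\<star>\<close> 70)
  where "a \<star> b \<equiv> left_twisted_prod m act \<psi>l a b"

abbreviation right_twisted :: "'a \<Rightarrow> 'a \<Rightarrow> 'a" (infixl \<open>\<diamond>\<close> 70)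
  where "a \<diamond> b \<equiv> right_twisted_prod m ract \<psi>r a b"

lemma ract_left_twisted_prod: "ract (a \<star> b) h = sum_pairs (\<Delta> h) (\<lambda>p q. ract a p \<star> ract b q)"
  unfolding left_twisted_prod_eq
  by (simp add: L.sum_pairs_distrib R.sum_pairs_distrib R.ract_m act_ract_commute
      sum_left_coaction_ract[OF R.vector_space_A] linearity sum_pairs_commute[of "\<Delta> h"])

lemma right_coaction_left_twisted_prod:
  "tensor_eq2 sA sH (\<psi>r (a \<star> b)) [(x \<star> y, mH h g). (x, h) \<leftarrow> \<psi>r a, (y, g) \<leftarrow> \<psi>r b]"
proof (rule tensor_eq2I)
  fix \<beta> :: "'a \<Rightarrow> 'h \<Rightarrow> 'k" assume \<beta>: "bilinear_map sA sH (*) \<beta>"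
  have "sum_pairs (\<psi>r (a \<star> b)) \<beta> = sum_pairs (\<psi>l a) (\<lambda>k x.
      sum_pairs (\<psi>r x) (\<lambda>x' h. sum_pairs (\<psi>r b) (\<lambda>y g. \<beta> (m x' (act k y)) (mH h g))))"
    unfolding left_twisted_prod_eq using \<beta>
    by (simp add: R.sum_coaction_sum_pairs[OF vector_space_times] R.sum_coaction_m[OF vector_space_times]
        sum_right_coaction_act[OF vector_space_times] linearity
        bilinear_map_compose_left[OF \<beta>] bilinear_map_compose_right[OF \<beta>])
  also have "\<dots> = sum_pairs (\<psi>r a) (\<lambda>x h.
      sum_pairs (\<psi>l x) (\<lambda>k x'. sum_pairs (\<psi>r b) (\<lambda>y g. \<beta> (m x' (act k y)) (mH h g))))"
    by (rule sum_bicoaction_coassoc[OF vector_space_times])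
      (simp add: linearity bilinear_map_compose_left[OF \<beta>] bilinear_map_compose_right[OF \<beta>])
  also have "\<dots> = sum_pairs [(x \<star> y, mH h g). (x, h) \<leftarrow> \<psi>r a, (y, g) \<leftarrow> \<psi>r b] \<beta>"
    unfolding left_twisted_prod_eq
    by (simp add: sum_pairs_concat_map sum_pairs_map bilinear_map_sum_pairs_left[OF \<beta>]
        sum_pairs_commute[of "\<psi>r b"])
  finally show "sum_pairs (\<psi>r (a \<star> b)) \<beta> = sum_pairs [(x \<star> y, mH h g). (x, h) \<leftarrow> \<psi>r a, (y, g) \<leftarrow> \<psi>r b] \<beta>" .
qed

lemma right_twisting_datum_left_twisted: "right_twisting_datum sH mH uH \<Delta> \<epsilon> sA (\<star>) u ract \<psi>r"
  using R.datum L.twisted_algebra ract_left_twisted_prod right_coaction_left_twisted_prod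
  by (simp add: right_twisting_datum_def right_module_algebra_def right_comodule_algebra_def sum_pairs_def)

lemma right_twisted_left_twisted_eq: "right_twisted_prod (\<star>) ract \<psi>r a b = lr_twisted_prod m act ract \<psi>l \<psi>r a b"
  unfolding right_twisted_prod_eq lr_twisted_prod_eq left_twisted_prod_eq
  by (simp add: sum_left_coaction_ract[OF R.vector_space_A] linearity sum_pairs_commute[of "\<psi>r b"])

lemma act_right_twisted_prod: "act h (a \<diamond> b) = sum_pairs (\<Delta> h) (\<lambda>p q. act p a \<diamond> act q b)"
  unfolding right_twisted_prod_eq
  by (simp add: L.sum_pairs_distrib R.sum_pairs_distrib L.act_m act_ract_commute
      sum_right_coaction_act[OF L.vector_space_A] linearity sum_pairs_commute[of "\<Delta> h"])

lemma left_coaction_right_twisted_prod: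
  "tensor_eq2 sH sA (\<psi>l (a \<diamond> b)) [(mH h g, x \<diamond> y). (h, x) \<leftarrow> \<psi>l a, (g, y) \<leftarrow> \<psi>l b]"
proof (rule tensor_eq2I)
  fix \<beta> :: "'h \<Rightarrow> 'a \<Rightarrow> 'k" assume \<beta>: "bilinear_map sH sA (*) \<beta>"
  have "sum_pairs (\<psi>l (a \<diamond> b)) \<beta> = sum_pairs (\<psi>l a) (\<lambda>h x.
      sum_pairs (\<psi>r b) (\<lambda>y g. sum_pairs (\<psi>l y) (\<lambda>k z. \<beta> (mH h k) (m (ract x g) z))))"
    unfolding right_twisted_prod_eq using \<beta>
    by (simp add: L.sum_coaction_sum_pairs[OF vector_space_times] L.sum_coaction_m[OF vector_space_times]
        sum_left_coaction_ract[OF vector_space_times] linearity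
        bilinear_map_compose_left[OF \<beta>] bilinear_map_compose_right[OF \<beta>] sum_pairs_commute[of "\<psi>r b"])
  also have "\<dots> = sum_pairs (\<psi>l a) (\<lambda>h x.
      sum_pairs (\<psi>l b) (\<lambda>k y. sum_pairs (\<psi>r y) (\<lambda>z g. \<beta> (mH h k) (m (ract x g) z))))"
    by (intro sum_pairs_cong sum_bicoaction_coassoc[OF vector_space_times, symmetric])
      (simp add: linearity bilinear_map_compose_left[OF \<beta>] bilinear_map_compose_right[OF \<beta>])
  also have "\<dots> = sum_pairs [(mH h g, x \<diamond> y). (h, x) \<leftarrow> \<psi>l a, (g, y) \<leftarrow> \<psi>l b] \<beta>"
    unfolding right_twisted_prod_eq
    by (simp add: sum_pairs_concat_map sum_pairs_map bilinear_map_sum_pairs_right[OF \<beta>])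
  finally show "sum_pairs (\<psi>l (a \<diamond> b)) \<beta> = sum_pairs [(mH h g, x \<diamond> y). (h, x) \<leftarrow> \<psi>l a, (g, y) \<leftarrow> \<psi>l b] \<beta>" .
qed

lemma left_twisting_datum_right_twisted: "left_twisting_datum sH mH uH \<Delta> \<epsilon> sA (\<diamond>) u act \<psi>l"
  using L.datum R.twisted_algebra act_right_twisted_prod left_coaction_right_twisted_prod
  by (simp add: left_twisting_datum_def left_module_algebra_def left_comodule_algebra_def sum_pairs_def)

lemma left_twisted_right_twisted_eq: "left_twisted_prod (\<diamond>) act \<psi>l a b = lr_twisted_prod m act ract \<psi>l \<psi>r a b"
  unfolding left_twisted_prod_eq lr_twisted_prod_eq right_twisted_prod_eq
  by (simp add: sum_right_coaction_act[OF L.vector_space_A] linearity)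

end

theorem proposition4p5:
  fixes sH :: "'k::field \<Rightarrow> 'h::ab_group_add \<Rightarrow> 'h"
    and mH :: "'h \<Rightarrow> 'h \<Rightarrow> 'h" and uH :: 'h
    and \<Delta> :: "'h \<Rightarrow> ('h \<times> 'h) list" and \<epsilon> :: "'h \<Rightarrow> 'k"
    and sA :: "'k \<Rightarrow> 'a::ab_group_add \<Rightarrow> 'a"
    and m :: "'a \<Rightarrow> 'a \<Rightarrow> 'a" and u :: 'a
    and act :: "'h \<Rightarrow> 'a \<Rightarrow> 'a" and ract :: "'a \<Rightarrow> 'h \<Rightarrow> 'a"
    and \<psi>l :: "'a \<Rightarrow> ('h \<times> 'a) list" and \<psi>r :: "'a \<Rightarrow> ('a \<times> 'h) list"
  assumes H: "bialgebra sH mH uH \<Delta> \<epsilon>"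
    and A: "k_algebra sA m u"
    and LR: "lr_twisting_datum sH mH uH \<Delta> \<epsilon> sA m u act ract \<psi>l \<psi>r"
  shows "right_twisting_datum sH mH uH \<Delta> \<epsilon> sA (left_twisted_prod m act \<psi>l) u ract \<psi>r \<and>
         (\<forall>a b. right_twisted_prod (left_twisted_prod m act \<psi>l) ract \<psi>r a b
                  = lr_twisted_prod m act ract \<psi>l \<psi>r a b) \<and>
         left_twisting_datum sH mH uH \<Delta> \<epsilon> sA (right_twisted_prod m ract \<psi>r) u act \<psi>l \<and>
         (\<forall>a b. left_twisted_prod (right_twisted_prod m ract \<psi>r) act \<psi>l a b
                  = lr_twisted_prod m act ract \<psi>l \<psi>r a b)"
proof -
  \<comment> \<open>H and A are already part of LR.\<close>
  interpret lr_twisting sH mH uH \<Delta> \<epsilon> sA m u act ract \<psi>l \<psi>r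
    by (rule lr_twisting.intro[OF LR])
  show ?thesis
    using right_twisting_datum_left_twisted right_twisted_left_twisted_eq
      left_twisting_datum_right_twisted left_twisted_right_twisted_eq
    by blast
qed

end
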